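(* Let $\Gamma$ be a finitely generated infinite group, $\{\Gamma_n\}$ a sequence of finite-index normal subgroups with $\bigcap_n\bigcup_{i\ge n}\Gamma_i=\{e\}$, $\pi_n:\Gamma\to\Gamma/\Gamma_n$ the quotient maps, and $S\subset\Gamma\setminus\{e\}$ a finite symmetric generating set. For every finite $A\subset\Gamma$ there is a finite $B\subset\Gamma$ with $A\subset B$ such that for all sufficiently large $n$, the set $(\Gamma/\Gamma_n)\setminus\pi_n(B)$ is connected in the Cayley graph $C(\Gamma/\Gamma_n,\pi_n(S))$.
   Context: $C(\Gamma/\Gamma_n,\pi_n(S))$ has vertex set $\Gamma/\Gamma_n$ and edges $\{g\Gamma_n,gs\Gamma_n\}$ for $g\in\Gamma,s\in S$. A vertex subset is connected if its induced subgraph (all edges with both endpoints in the set) is connected. *)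

theory Defs
  imports "HOL-Algebra.Algebra"
begin

definition quot_vertices :: "('a, 'b) monoid_scheme \<Rightarrow> 'a set \<Rightarrow> 'a set set" where
  "quot_vertices G H = (\<lambda>g. l_coset G g H) ` carrier G"

definition cayley_edge :: "('a, 'b) monoid_scheme \<Rightarrow> 'a set \<Rightarrow> 'a set \<Rightarrow> 'a set \<Rightarrow> 'a set \<Rightarrow> bool" where
  "cayley_edge G H S U V \<longleftrightarrow>
     (\<exists>g\<in>carrier G. \<exists>s\<in>S.
        (U = l_coset G g H \<and> V = l_coset G (monoid.mult G g s) H) \<or>
        (V = l_coset G g H \<and> U = l_coset G (monoid.mult G g s) H))"

definition cayley_connected :: "('a, 'b) monoid_scheme \<Rightarrow> 'a set \<Rightarrow> 'a set \<Rightarrow> 'a set set \<Rightarrow> bool" where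
  "cayley_connected G H S W \<longleftrightarrow>
     (\<forall>U\<in>W. \<forall>V\<in>W. (\<lambda>A B. A \<in> W \<and> B \<in> W \<and> cayley_edge G H S A B)\<^sup>*\<^sup>* U V)"

end

theory Submission
  imports Defs
begin

(* The multiset notation "<#" clashes with the left coset notation of HOL-Algebra. *)
no_notation (ASCII) subset_mset (infix \<open><#\<close> 50)

(*
  Given a finite set A, we
  enlarge a word-metric ball containing A to a finite connected set B, containing the identity,
  which has no finite holes: no nonempty finite set outside B is closed under right
  multiplication by S modulo B (the "trap" lemmas below, fill_traps, filled_set_exists).

  For large n the projection onto G/H_n is injective on the finite set spread B = B B^-1 (S + 1)
  (eventually_inj_on_cosets).  Under this injectivity the locale cayley_quotient shows that
  W = (G/H_n) - proj(B) is connected in the Cayley graph.  Call h far if proj(hB) misses proj(B).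
  (1) Every component of W contains proj h for some far h; otherwise the component lifts to a
      finite hole of B in G (reach_far).
  (2) All far vertices lie in one component: left translation by h^-1 maps the components of W
      not containing proj h into W, and counting in the finite quotient shows that two such
      components would be translates of each other, which is absurd (far_conn_inv, far_far).
  The theorem lemma5p3 combines these.
*)

section \<open>Paths in induced subgraphs\<close>

definition induced :: "'a set \<Rightarrow> ('a \<Rightarrow> 'a \<Rightarrow> bool) \<Rightarrow> 'a \<Rightarrow> 'a \<Rightarrow> bool" where
  "induced P r x y \<longleftrightarrow> x \<in> P \<and> y \<in> P \<and> r x y"

lemma rtranclp_map:
  assumes "r\<^sup>*\<^sup>* a b" and "\<And>x y. r x y \<Longrightarrow> r' (f x) (f y)"
  shows "r'\<^sup>*\<^sup>* (f a) (f b)"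
  using assms(1) by induction (auto intro: rtranclp.rtrancl_into_rtrancl assms(2))

lemma induced_rtranclp_mem:
  assumes "(induced P r)\<^sup>*\<^sup>* x y" and "x \<in> P"
  shows "y \<in> P"
  using assms by induction (auto simp: induced_def)

lemma induced_rtranclp_mono:
  assumes "(induced P r)\<^sup>*\<^sup>* x y" and "P \<subseteq> Q"
  shows "(induced Q r)\<^sup>*\<^sup>* x y"
  using assms(1)
  by induction (use assms(2) in \<open>auto simp: induced_def intro: rtranclp.rtrancl_into_rtrancl\<close>)

lemma induced_rtranclp_sym:
  assumes "symp r" and "(induced P r)\<^sup>*\<^sup>* x y"
  shows "(induced P r)\<^sup>*\<^sup>* y x"
proof -
  have "symp (induced P r)" using assms(1) by (auto simp: symp_def induced_def)
  then show ?thesis using assms(2) by (metis sympD symp_rtranclp)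
qed

lemma induced_component:
  assumes "(induced P r)\<^sup>*\<^sup>* x y"
  shows "(induced {z. (induced P r)\<^sup>*\<^sup>* x z} r)\<^sup>*\<^sup>* x y"
  using assms
proof induction
  case base
  then show ?case by simp
next
  case (step y z)
  then have "induced {z. (induced P r)\<^sup>*\<^sup>* x z} r y z"
    by (auto simp: induced_def intro: rtranclp.rtrancl_into_rtrancl)
  with step.IH show ?case by (rule rtranclp.rtrancl_into_rtrancl)
qed

lemma exit_path:
  assumes "r\<^sup>*\<^sup>* x z" and "x \<in> P" and "z \<notin> P"
  shows "\<exists>y y'. (induced P r)\<^sup>*\<^sup>* x y \<and> y \<in> P \<and> r y y' \<and> y' \<notin> P"
  using assms
proof (induction rule: converse_rtranclp_induct)
  case base
  then show ?case by simp
next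
  case (step x w)
  show ?case
  proof (cases "w \<in> P")
    case True
    then obtain y y' where "(induced P r)\<^sup>*\<^sup>* w y" "y \<in> P" "r y y'" "y' \<notin> P"
      using step by blast
    moreover have "induced P r x w" using True step by (simp add: induced_def)
    ultimately show ?thesis by (blast intro: converse_rtranclp_into_rtranclp)
  next
    case False
    then show ?thesis using step by blast
  qed
qed

lemma image_squeeze:
  assumes "finite A" and "finite C" and "A \<subseteq> f ` C" and "C \<subseteq> g ` A"
  shows "A = f ` C"
proof -
  have "card (f ` C) \<le> card A"
    using card_image_le[OF assms(2), of f] card_mono[OF finite_imageI[OF assms(1)] assms(4)]
      card_image_le[OF assms(1), of g] by linarith
  then show ?thesis
    using card_subset_eq[OF finite_imageI[OF assms(2)] assms(3)]
      card_mono[OF finite_imageI[OF assms(2)] assms(3)] by linarith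
qed

lemma finite_bound:
  assumes "finite A" and "\<forall>a\<in>A. \<exists>k::nat. P a k"
  shows "\<exists>R. \<forall>a\<in>A. \<exists>k\<le>R. P a k"
proof -
  obtain f where "\<forall>a\<in>A. P a (f a)" using assms(2) by metis
  then show ?thesis using assms(1) by (metis Max_ge finite_imageI imageI)
qed

section \<open>Filling the finite holes of a set\<close>

definition trap :: "('a \<Rightarrow> 'a \<Rightarrow> bool) \<Rightarrow> 'a set \<Rightarrow> 'a set \<Rightarrow> bool" where
  "trap r B K \<longleftrightarrow> finite K \<and> K \<inter> B = {} \<and> (\<forall>x\<in>K. \<forall>y. r x y \<longrightarrow> y \<in> K \<union> B)"

lemma trap_stays:
  assumes "trap r B K" and "(induced (- B) r)\<^sup>*\<^sup>* x y" and "x \<in> K"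
  shows "y \<in> K"
  using assms(2,3) by induction (use assms(1) in \<open>auto simp: trap_def induced_def\<close>)

lemma trap_exit:
  assumes "trap r B K" and "x \<in> K" and "r\<^sup>*\<^sup>* x c" and "c \<in> B"
  shows "\<exists>y b. (induced (- B) r)\<^sup>*\<^sup>* x y \<and> y \<in> K \<and> r y b \<and> b \<in> B"
proof -
  have "x \<in> - B" using assms(1,2) by (auto simp: trap_def)
  then obtain y b where "(induced (- B) r)\<^sup>*\<^sup>* x y" "r y b" "b \<in> B"
    using exit_path[OF assms(3), of "- B"] assms(4) by auto
  then show ?thesis using trap_stays[OF assms(1) _ assms(2)] by blast
qed

text \<open>In a connected graph where B has finitely many neighbours, the union of all traps of B
  is finite: each point of a trap lies in a finite component of the complement of B, and that
  component contains a neighbour of B.\<close>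

lemma finite_Union_traps:
  assumes "symp r" and "\<And>x. x \<in> D \<Longrightarrow> r\<^sup>*\<^sup>* x c" and "c \<in> B"
    and "finite {y. \<exists>b\<in>B. r y b}"
  shows "finite (\<Union>{K. K \<subseteq> D \<and> trap r B K})"
proof -
  define comp where "comp y = {z. (induced (- B) r)\<^sup>*\<^sup>* y z}" for y
  define N where "N = {y. \<exists>b\<in>B. r y b}"
  have "\<Union>{K. K \<subseteq> D \<and> trap r B K} \<subseteq> \<Union>(comp ` {y \<in> N. finite (comp y)})"
  proof
    fix x assume "x \<in> \<Union>{K. K \<subseteq> D \<and> trap r B K}"
    then obtain K where K: "K \<subseteq> D" "trap r B K" "x \<in> K" by blast
    then obtain y b where yb: "(induced (- B) r)\<^sup>*\<^sup>* x y" "y \<in> K" "r y b" "b \<in> B"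
      using trap_exit[OF K(2,3) assms(2) assms(3)] by blast
    have "comp y \<subseteq> K" using trap_stays[OF K(2) _ yb(2)] by (auto simp: comp_def)
    then have "finite (comp y)" using K(2) finite_subset by (auto simp: trap_def)
    moreover have "x \<in> comp y" using induced_rtranclp_sym[OF assms(1) yb(1)] by (simp add: comp_def)
    ultimately show "x \<in> \<Union>(comp ` {y \<in> N. finite (comp y)})" using yb by (auto simp: N_def)
  qed
  moreover have "finite (\<Union>(comp ` {y \<in> N. finite (comp y)}))"
    using assms(4) by (auto simp: N_def)
  ultimately show ?thesis by (rule finite_subset)
qed

lemma fill_traps:
  assumes sym: "symp r" and conn: "\<And>x. x \<in> D \<Longrightarrow> r\<^sup>*\<^sup>* x c"
    and B0: "finite B0" "c \<in> B0" "B0 \<subseteq> D" "\<And>b. b \<in> B0 \<Longrightarrow> (induced B0 r)\<^sup>*\<^sup>* c b"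
    and nbhd: "finite {y. \<exists>b\<in>B0. r y b}"
  defines "B \<equiv> B0 \<union> \<Union>{K. K \<subseteq> D \<and> trap r B0 K}"
  shows "finite B" and "B0 \<subseteq> B" and "B \<subseteq> D" and "\<And>b. b \<in> B \<Longrightarrow> (induced B r)\<^sup>*\<^sup>* c b"
    and "\<And>K. K \<subseteq> D \<Longrightarrow> trap r B K \<Longrightarrow> K = {}"
proof -
  define T where "T = \<Union>{K. K \<subseteq> D \<and> trap r B0 K}"
  have B_eq: "B = B0 \<union> T" by (simp add: B_def T_def)
  have finT: "finite T" unfolding T_def using finite_Union_traps[OF sym conn B0(2) nbhd] .
  show "finite B" using finT B0(1) by (simp add: B_eq)
  show B0B: "B0 \<subseteq> B" by (simp add: B_eq)
  show "B \<subseteq> D" using B0(3) by (auto simp: B_eq T_def)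
  show "(induced B r)\<^sup>*\<^sup>* c b" if b: "b \<in> B" for b
  proof (cases "b \<in> B0")
    case True
    then show ?thesis using induced_rtranclp_mono[OF B0(4) B0B] by blast
  next
    case False
    then obtain K where K: "K \<subseteq> D" "trap r B0 K" "b \<in> K" using b unfolding B_eq T_def by blast
    then obtain y b' where yb: "(induced (- B0) r)\<^sup>*\<^sup>* b y" "y \<in> K" "r y b'" "b' \<in> B0"
      using trap_exit[OF K(2,3) conn B0(2)] by blast
    have KB: "K \<subseteq> B" using K(1,2) unfolding B_eq T_def by blast
    have "(induced B r)\<^sup>*\<^sup>* c b'" using induced_rtranclp_mono[OF B0(4)[OF yb(4)] B0B] .
    moreover have "induced B r b' y"
      using yb(2,4) KB B0B sympD[OF sym yb(3)] by (auto simp: induced_def)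
    moreover have "(induced B r)\<^sup>*\<^sup>* y b"
    proof -
      have "(induced (- B0) r)\<^sup>*\<^sup>* y b" using induced_rtranclp_sym[OF sym yb(1)] .
      moreover have "{z. (induced (- B0) r)\<^sup>*\<^sup>* y z} \<subseteq> B"
        using trap_stays[OF K(2) _ yb(2)] KB by blast
      ultimately show ?thesis by (rule induced_rtranclp_mono[OF induced_component])
    qed
    ultimately show ?thesis by (rule rtranclp_trans[OF rtranclp.rtrancl_into_rtrancl])
  qed
  show "K = {}" if K: "K \<subseteq> D" "trap r B K" for K
  proof -
    have "trap r B0 (K \<union> T)"
      unfolding trap_def
    proof (intro conjI ballI allI impI)
      show "finite (K \<union> T)" using K(2) finT by (simp add: trap_def)
      show "(K \<union> T) \<inter> B0 = {}" using K(2) unfolding trap_def B_eq T_def by blast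
      show "y \<in> K \<union> T \<union> B0" if "x \<in> K \<union> T" "r x y" for x y
        using that K(2) unfolding trap_def B_eq T_def by blast
    qed
    moreover have "K \<union> T \<subseteq> D" using K(1) unfolding T_def by blast
    ultimately have "K \<union> T \<subseteq> T" unfolding T_def by (intro Union_upper) blast
    then show ?thesis using K(2) unfolding trap_def B_eq by blast
  qed
qed

section \<open>Left cosets\<close>

lemma (in group) l_coset_eq_iff:
  assumes "subgroup H G" and "x \<in> carrier G" and "y \<in> carrier G"
  shows "x <# H = y <# H \<longleftrightarrow> inv x \<otimes> y \<in> H"
proof
  assume "x <# H = y <# H"
  then have "y \<in> x <# H" using lcos_self[OF assms(3,1)] by simp
  then show "inv x \<otimes> y \<in> H" using subgroup.lcos_module_imp[OF assms(1) is_group assms(2)] by blast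
next
  assume "inv x \<otimes> y \<in> H"
  moreover have "y = x \<otimes> (inv x \<otimes> y)" using assms(2,3) by (simp add: m_assoc[symmetric])
  ultimately have "y \<in> x <# H" unfolding l_coset_def by blast
  then show "x <# H = y <# H" using l_repr_independence[OF _ assms(2,1)] by blast
qed

lemma (in group) finite_quot_vertices:
  assumes "H \<lhd> G" and "finite (rcosets H)"
  shows "finite (quot_vertices G H)"
proof -
  have "quot_vertices G H \<subseteq> rcosets H"
  proof
    fix U assume "U \<in> quot_vertices G H"
    then obtain g where g: "g \<in> carrier G" "U = g <# H" by (auto simp: quot_vertices_def)
    then have "U = H #> g" using normal.coset_eq[OF assms(1)] by simp
    then show "U \<in> rcosets H" using g(1) by (auto simp: RCOSETS_def)
  qed
  then show ?thesis using assms(2) by (rule finite_subset)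
qed

lemma (in group) l_coset_inj_on:
  assumes "subgroup H G" and "C \<subseteq> carrier G"
    and "\<And>x y. x \<in> C \<Longrightarrow> y \<in> C \<Longrightarrow> x \<noteq> y \<Longrightarrow> inv x \<otimes> y \<notin> H"
  shows "inj_on (\<lambda>g. g <# H) C"
proof (rule inj_onI)
  fix x y assume xy: "x \<in> C" "y \<in> C" "x <# H = y <# H"
  then have "inv x \<otimes> y \<in> H" using l_coset_eq_iff[OF assms(1)] assms(2) by blast
  then show "x = y" using assms(3) xy(1,2) by blast
qed

lemma (in group) inv_mult_eq_one_iff:
  "x \<in> carrier G \<Longrightarrow> y \<in> carrier G \<Longrightarrow> inv x \<otimes> y = \<one> \<longleftrightarrow> x = y"
  by (metis inv_closed inv_comm inv_equality r_inv)

section \<open>The Cayley graph of G and hole-free sets\<close>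

locale cayley_graph = group G for G (structure) +
  fixes S
  assumes gens_carrier: "S \<subseteq> carrier G"
    and gens_inv: "\<And>s. s \<in> S \<Longrightarrow> inv s \<in> S"
    and gens_generate: "generate G S = carrier G"
    and gens_finite: "finite S"
begin

definition edge :: "'a \<Rightarrow> 'a \<Rightarrow> bool" where
  "edge x y \<longleftrightarrow> x \<in> carrier G \<and> (\<exists>s\<in>S. y = x \<otimes> s)"

lemma edge_carrier: "edge x y \<Longrightarrow> y \<in> carrier G"
  using gens_carrier by (auto simp: edge_def)

lemma edge_symp: "symp edge"
proof (rule sympI)
  fix x y assume "edge x y"
  then obtain s where s: "s \<in> S" "y = x \<otimes> s" "x \<in> carrier G" by (auto simp: edge_def)
  then have "s \<in> carrier G" using gens_carrier by blast
  then have "x = y \<otimes> inv s" "y \<in> carrier G" using s by (simp_all add: m_assoc)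
  then show "edge y x" using gens_inv[OF s(1)] by (auto simp: edge_def)
qed

lemma edge_translate:
  assumes "edge x y" and "h \<in> carrier G"
  shows "edge (h \<otimes> x) (h \<otimes> y)"
proof -
  obtain s where s: "s \<in> S" "y = x \<otimes> s" "x \<in> carrier G" using assms(1) by (auto simp: edge_def)
  then have "h \<otimes> y = (h \<otimes> x) \<otimes> s" using assms(2) gens_carrier by (auto simp: m_assoc)
  then show ?thesis using s assms(2) by (auto simp: edge_def)
qed

lemma walk_from_one: "g \<in> carrier G \<Longrightarrow> edge\<^sup>*\<^sup>* \<one> g"
  unfolding gens_generate[symmetric]
proof (induction rule: generate.induct)
  case one
  then show ?case by simp
next
  case (incl s)
  then have "edge \<one> s" using gens_carrier by (auto simp: edge_def intro!: bexI[of _ s])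
  then show ?case by simp
next
  case (inv s)
  then have "edge \<one> (inv s)"
    using gens_carrier gens_inv by (auto simp: edge_def intro!: bexI[of _ "inv s"])
  then show ?case by simp
next
  case (eng g h)
  have g: "g \<in> carrier G" using eng(1) gens_generate by simp
  have "edge\<^sup>*\<^sup>* (g \<otimes> \<one>) (g \<otimes> h)"
    using rtranclp_map[OF eng(4), of "\<lambda>x y. edge x y" "\<lambda>x. g \<otimes> x"] edge_translate g by blast
  then show ?case using eng(3) g by simp
qed

lemma walk_to_one: "g \<in> carrier G \<Longrightarrow> edge\<^sup>*\<^sup>* g \<one>"
  using walk_from_one edge_symp by (metis sympD symp_rtranclp)

definition word_ball :: "nat \<Rightarrow> 'a set" where
  "word_ball R = {g. \<exists>k\<le>R. (edge ^^ k) \<one> g}"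

lemma sphere_finite: "finite {g. (edge ^^ k) \<one> g}"
proof (induction k)
  case 0
  then show ?case by simp
next
  case (Suc k)
  have "{g. (edge ^^ Suc k) \<one> g} \<subseteq> (\<lambda>(y, s). y \<otimes> s) ` ({y. (edge ^^ k) \<one> y} \<times> S)"
    by (auto simp: edge_def elim!: relpowp_Suc_E)
  moreover have "finite ((\<lambda>(y, s). y \<otimes> s) ` ({y. (edge ^^ k) \<one> y} \<times> S))"
    using Suc gens_finite by simp
  ultimately show ?case by (rule finite_subset)
qed

lemma word_ball_finite: "finite (word_ball R)"
proof -
  have "word_ball R = (\<Union>k\<le>R. {g. (edge ^^ k) \<one> g})" by (auto simp: word_ball_def)
  then show ?thesis using sphere_finite by simp
qed

lemma word_ball_carrier: "word_ball R \<subseteq> carrier G"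
proof
  fix g assume "g \<in> word_ball R"
  then obtain k where "(edge ^^ k) \<one> g" by (auto simp: word_ball_def)
  then show "g \<in> carrier G" by (cases k) (auto elim: relpowp_Suc_E dest: edge_carrier)
qed

lemma word_ball_connected:
  assumes "g \<in> word_ball R"
  shows "(induced (word_ball R) edge)\<^sup>*\<^sup>* \<one> g"
proof -
  have "(induced (word_ball R) edge)\<^sup>*\<^sup>* \<one> g" if "(edge ^^ k) \<one> g" "k \<le> R" for k g
    using that
  proof (induction k arbitrary: g)
    case 0
    then show ?case by simp
  next
    case (Suc k)
    then obtain y where y: "(edge ^^ k) \<one> y" "edge y g" by (auto elim: relpowp_Suc_E)
    have "y \<in> word_ball R"
      using y(1) Suc.prems(2) unfolding word_ball_def by (auto intro!: exI[of _ k])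
    moreover have "g \<in> word_ball R"
      using relpowp_Suc_I[OF y] Suc.prems(2) unfolding word_ball_def by blast
    ultimately have "induced (word_ball R) edge y g" using y(2) by (simp add: induced_def)
    then show ?case using Suc.IH[OF y(1)] Suc.prems(2) by (simp add: rtranclp.rtrancl_into_rtrancl)
  qed
  then show ?thesis using assms by (auto simp: word_ball_def)
qed

lemma word_ball_neighbours: "{y. \<exists>b\<in>word_ball R. edge y b} \<subseteq> word_ball (Suc R)"
proof
  fix y assume "y \<in> {y. \<exists>b\<in>word_ball R. edge y b}"
  then obtain b k where "edge b y" "(edge ^^ k) \<one> b" "k \<le> R"
    using edge_symp by (auto simp: word_ball_def dest: sympD)
  then show "y \<in> word_ball (Suc R)" unfolding word_ball_def
    by (intro CollectI exI[of _ "Suc k"]) auto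
qed

lemma word_ball_exhausts:
  assumes "finite A" and "A \<subseteq> carrier G"
  obtains R where "A \<subseteq> word_ball R"
proof -
  have "\<forall>a\<in>A. \<exists>k. (edge ^^ k) \<one> a"
  proof
    fix a assume "a \<in> A"
    then show "\<exists>k. (edge ^^ k) \<one> a"
      using assms(2) by (intro rtranclp_imp_relpowp walk_from_one) blast
  qed
  then obtain R where "\<forall>a\<in>A. \<exists>k\<le>R. (edge ^^ k) \<one> a"
    using finite_bound[OF assms(1), of "\<lambda>a k. (edge ^^ k) \<one> a"] by blast
  then have "A \<subseteq> word_ball R" unfolding word_ball_def by blast
  then show ?thesis by (rule that)
qed

lemma filled_set_exists:
  assumes "finite A" and "A \<subseteq> carrier G"
  obtains B where "finite B" "A \<subseteq> B" "B \<subseteq> carrier G" "\<one> \<in> B"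
    "\<And>b. b \<in> B \<Longrightarrow> (induced B edge)\<^sup>*\<^sup>* \<one> b"
    "\<And>K. K \<subseteq> carrier G \<Longrightarrow> trap edge B K \<Longrightarrow> K = {}"
proof -
  obtain R where R: "A \<subseteq> word_ball R" using word_ball_exhausts[OF assms] .
  have one: "\<one> \<in> word_ball R" by (auto simp: word_ball_def intro: exI[of _ 0])
  have nbhd: "finite {y. \<exists>b\<in>word_ball R. edge y b}"
    using word_ball_neighbours word_ball_finite by (rule finite_subset)
  note fill = fill_traps[OF edge_symp walk_to_one word_ball_finite one word_ball_carrier
      word_ball_connected nbhd]
  show ?thesis
    by (rule that[OF fill(1) subset_trans[OF R fill(2)] fill(3) subsetD[OF fill(2) one] fill(4,5)])
qed

text \<open>Quotients b' b^-1 of elements of B, and their right translates by S and 1; injectivity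
  of the quotient map on spread B is what the analysis of the quotient graph requires.\<close>

definition diffs :: "'a set \<Rightarrow> 'a set" where
  "diffs B = (\<lambda>(b, b'). b' \<otimes> inv b) ` (B \<times> B)"

definition spread :: "'a set \<Rightarrow> 'a set" where
  "spread B = (\<lambda>(d, s). d \<otimes> s) ` (diffs B \<times> insert \<one> S)"

lemma spread_finite: "finite B \<Longrightarrow> finite (spread B)"
  using gens_finite by (simp add: spread_def diffs_def)

lemma diffs_carrier: "B \<subseteq> carrier G \<Longrightarrow> diffs B \<subseteq> carrier G"
  by (auto simp: diffs_def)

lemma spread_carrier: "B \<subseteq> carrier G \<Longrightarrow> spread B \<subseteq> carrier G"
  using diffs_carrier[of B] gens_carrier by (auto simp: spread_def)

lemma diffs_times_gen_spread: "d \<in> diffs B \<Longrightarrow> s \<in> S \<Longrightarrow> d \<otimes> s \<in> spread B"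
  by (force simp: spread_def)

lemma diffs_spread: "B \<subseteq> carrier G \<Longrightarrow> d \<in> diffs B \<Longrightarrow> d \<in> spread B"
  using diffs_carrier[of B] unfolding spread_def by (intro rev_image_eqI[of "(d, \<one>)"]) auto

lemma subset_diffs:
  assumes "\<one> \<in> B" and "B \<subseteq> carrier G"
  shows "B \<subseteq> diffs B"
proof
  fix b assume "b \<in> B"
  then have "b = b \<otimes> inv \<one>" using assms(2) by auto
  then show "b \<in> diffs B" unfolding diffs_def using \<open>b \<in> B\<close> assms(1) by force
qed

end

section \<open>The complement of B in a quotient Cayley graph\<close>

locale cayley_quotient = cayley_graph G S for G (structure) and S +
  fixes H :: "'a set" and B :: "'a set"
  assumes normal_H: "H \<lhd> G"
    and finite_index: "finite (rcosets H)"
    and B_finite: "finite B"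
    and B_carrier: "B \<subseteq> carrier G"
    and one_in_B: "\<one> \<in> B"
    and B_connected: "\<And>b. b \<in> B \<Longrightarrow> (induced B edge)\<^sup>*\<^sup>* \<one> b"
    and B_no_trap: "\<And>K. K \<subseteq> carrier G \<Longrightarrow> trap edge B K \<Longrightarrow> K = {}"
    and spread_inj: "inj_on (\<lambda>g. g <# H) (spread B)"
begin

definition proj :: "'a \<Rightarrow> 'a set" where "proj g = g <# H"
definition V :: "'a set set" where "V = quot_vertices G H"
definition E :: "'a set \<Rightarrow> 'a set \<Rightarrow> bool" where "E = cayley_edge G H S"
definition W :: "'a set set" where "W = V - proj ` B"
definition conn :: "'a set \<Rightarrow> 'a set \<Rightarrow> bool" where "conn = (induced W E)\<^sup>*\<^sup>*"

lemma H_carrier: "H \<subseteq> carrier G"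
  using normal_H normal_imp_subgroup subgroup.subset by blast

lemma proj_mult: "h \<in> carrier G \<Longrightarrow> g \<in> carrier G \<Longrightarrow> h <# proj g = proj (h \<otimes> g)"
  unfolding proj_def using lcos_m_assoc[OF H_carrier] by blast

lemma V_eq: "V = proj ` carrier G"
  by (simp add: V_def quot_vertices_def proj_def)

lemma V_finite: "finite V"
  unfolding V_def using finite_quot_vertices[OF normal_H finite_index] .

lemma E_iff: "E U U' \<longleftrightarrow> (\<exists>x y. edge x y \<and> U = proj x \<and> U' = proj y)"
proof
  assume "E U U'"
  then obtain g s where gs: "g \<in> carrier G" "s \<in> S"
    "(U = proj g \<and> U' = proj (g \<otimes> s)) \<or> (U' = proj g \<and> U = proj (g \<otimes> s))"
    by (auto simp: E_def cayley_edge_def proj_def)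
  have "edge g (g \<otimes> s)" using gs by (auto simp: edge_def)
  then show "\<exists>x y. edge x y \<and> U = proj x \<and> U' = proj y"
    using gs(3) edge_symp by (blast dest: sympD)
next
  assume "\<exists>x y. edge x y \<and> U = proj x \<and> U' = proj y"
  then show "E U U'" by (auto simp: E_def cayley_edge_def proj_def edge_def)
qed

lemma E_proj: "edge x y \<Longrightarrow> E (proj x) (proj y)"
  by (auto simp: E_iff)

lemma E_symp: "symp E"
  using edge_symp by (auto simp: symp_def E_iff)

lemma E_in_V: "E U U' \<Longrightarrow> U' \<in> V"
  by (auto simp: E_iff V_eq dest: edge_carrier)

lemma E_translate:
  assumes "E U U'" and "h \<in> carrier G"
  shows "E (h <# U) (h <# U')"
proof -
  obtain x y where xy: "edge x y" "U = proj x" "U' = proj y" using assms(1) by (auto simp: E_iff)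
  have "x \<in> carrier G" "y \<in> carrier G" using xy(1) edge_carrier edge_symp by (auto dest: sympD)
  then show ?thesis using xy assms(2) proj_mult E_proj[OF edge_translate] by simp
qed

lemma translate_V: "h \<in> carrier G \<Longrightarrow> Y \<in> V \<Longrightarrow> h <# Y \<in> V"
  unfolding V_eq using proj_mult by auto

lemma translate_cancel: "h \<in> carrier G \<Longrightarrow> Y \<in> V \<Longrightarrow> h <# (inv h <# Y) = Y"
  unfolding V_eq using proj_mult by (auto simp: m_assoc[symmetric])

lemma conn_sym: "conn U Z \<Longrightarrow> conn Z U"
  unfolding conn_def using induced_rtranclp_sym[OF E_symp] .

lemma conn_trans: "conn U Z \<Longrightarrow> conn Z Y \<Longrightarrow> conn U Y"
  unfolding conn_def by (rule rtranclp_trans)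

lemma conn_W: "conn U Z \<Longrightarrow> U \<in> W \<Longrightarrow> Z \<in> W"
  unfolding conn_def by (rule induced_rtranclp_mem)

lemma conn_edge:
  assumes "conn U Z" and "U \<in> W" and "Y \<in> W" and "E Z Y"
  shows "conn U Y"
proof -
  have "induced W E Z Y" using assms conn_W by (simp add: induced_def)
  with assms(1) show ?thesis unfolding conn_def by (rule rtranclp.rtrancl_into_rtrancl)
qed

lemma walk_proj: "edge\<^sup>*\<^sup>* a b \<Longrightarrow> E\<^sup>*\<^sup>* (proj a) (proj b)"
  using rtranclp_map E_proj by metis

lemma component_meets_B:
  assumes "U \<in> W"
  shows "\<exists>Y b. conn U Y \<and> b \<in> B \<and> E Y (proj b)"
proof -
  obtain g where g: "g \<in> carrier G" "U = proj g" using assms by (auto simp: W_def V_eq)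
  have "E\<^sup>*\<^sup>* U (proj \<one>)" using walk_proj[OF walk_to_one[OF g(1)]] g(2) by simp
  moreover have "proj \<one> \<notin> W" using one_in_B by (simp add: W_def)
  ultimately obtain Y Y' where Y: "conn U Y" "Y \<in> W" "E Y Y'" "Y' \<notin> W"
    using exit_path[of E U "proj \<one>" W] assms unfolding conn_def by blast
  then have "Y' \<in> proj ` B" using E_in_V by (auto simp: W_def)
  then show ?thesis using Y by blast
qed

lemma component_finite: "finite {Z. conn U Z}" if "U \<in> W"
proof -
  have "{Z. conn U Z} \<subseteq> V" using conn_W[OF _ that] by (auto simp: W_def)
  then show ?thesis using V_finite finite_subset by blast
qed

definition far :: "'a \<Rightarrow> bool" where
  "far h \<longleftrightarrow> h \<in> carrier G \<and> (\<forall>b\<in>B. proj (h \<otimes> b) \<notin> proj ` B)"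

lemma far_W: "far h \<Longrightarrow> b \<in> B \<Longrightarrow> proj (h \<otimes> b) \<in> W"
  using B_carrier by (auto simp: far_def W_def V_eq)

lemma far_W_one: "far h \<Longrightarrow> proj h \<in> W"
  using far_W[OF _ one_in_B] by (simp add: far_def)

lemma far_inv:
  assumes "far h"
  shows "far (inv h)"
proof -
  have h: "h \<in> carrier G" using assms by (simp add: far_def)
  have "proj (inv h \<otimes> b) \<noteq> proj b'" if "b \<in> B" "b' \<in> B" for b b'
  proof
    assume "proj (inv h \<otimes> b) = proj b'"
    then have "h <# proj (inv h \<otimes> b) = h <# proj b'" by simp
    moreover have "h <# proj (inv h \<otimes> b) = proj b"
      using h that(1) B_carrier by (simp add: proj_mult subsetD m_assoc[symmetric])
    moreover have "h <# proj b' = proj (h \<otimes> b')"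
      using h that(2) B_carrier by (simp add: proj_mult subsetD)
    ultimately have "proj b = proj (h \<otimes> b')" by simp
    then show False using assms that by (auto simp: far_def)
  qed
  then show ?thesis using h by (auto simp: far_def)
qed

lemma far_conn:
  assumes "far h" and "b \<in> B"
  shows "conn (proj h) (proj (h \<otimes> b))"
proof -
  have h: "h \<in> carrier G" using assms(1) by (simp add: far_def)
  have "conn (proj (h \<otimes> \<one>)) (proj (h \<otimes> b))" unfolding conn_def
  proof (rule rtranclp_map[OF B_connected[OF assms(2)]])
    fix x y assume "induced B edge x y"
    then show "induced W E (proj (h \<otimes> x)) (proj (h \<otimes> y))"
      using far_W[OF assms(1)] E_proj[OF edge_translate[OF _ h]] by (simp add: induced_def)
  qed
  then show ?thesis using h by simp
qed

lemma translate_outside: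
  assumes "far h" and "Y \<in> W" and "\<not> conn (proj h) Y"
  shows "inv h <# Y \<in> W"
proof -
  have h: "h \<in> carrier G" using assms(1) by (simp add: far_def)
  have Y: "Y \<in> V" using assms(2) by (simp add: W_def)
  have "inv h <# Y \<notin> proj ` B"
  proof
    assume "inv h <# Y \<in> proj ` B"
    then obtain b where b: "b \<in> B" "inv h <# Y = proj b" by blast
    have "Y = h <# (inv h <# Y)" using translate_cancel[OF h Y] by simp
    also have "\<dots> = proj (h \<otimes> b)" using b h B_carrier by (simp add: proj_mult subsetD)
    finally show False using far_conn[OF assms(1) b(1)] assms(3) by simp
  qed
  moreover have "inv h <# Y \<in> V" using translate_V[OF inv_closed[OF h] Y] .
  ultimately show ?thesis by (simp add: W_def)
qed

lemma translate_component:
  assumes "far h" and "U \<in> W" and "\<not> conn (proj h) U" and "conn U Z"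
  shows "conn (inv h <# U) (inv h <# Z)"
proof -
  have h: "inv h \<in> carrier G" using assms(1) by (simp add: far_def)
  have "(induced {Y. conn U Y} E)\<^sup>*\<^sup>* U Z"
    using induced_component[of W E U Z] assms(4) unfolding conn_def by simp
  then have "(induced W E)\<^sup>*\<^sup>* (inv h <# U) (inv h <# Z)"
  proof (rule rtranclp_map[where f = "\<lambda>Y. inv h <# Y"])
    fix A A' assume AA': "induced {Y. conn U Y} E A A'"
    have "A \<in> W \<and> \<not> conn (proj h) A" if "conn U A" for A
      using that conn_W[OF that assms(2)] assms(3) conn_sym conn_trans by blast
    then show "induced W E (inv h <# A) (inv h <# A')"
      using AA' translate_outside[OF assms(1)] E_translate[OF _ h] by (simp add: induced_def)
  qed
  then show ?thesis by (simp add: conn_def)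
qed

text \<open>If translation by a far h maps some component into the component of U, then U is
  connected to proj h: the translated component is adjacent to proj (h B).\<close>

lemma absorb:
  assumes "far h" and "U \<in> W" and "U' \<in> W" and "\<And>Y. conn U' Y \<Longrightarrow> conn U (h <# Y)"
  shows "conn (proj h) U"
proof -
  have h: "h \<in> carrier G" using assms(1) by (simp add: far_def)
  obtain Y b where Y: "conn U' Y" "b \<in> B" "E Y (proj b)"
    using component_meets_B[OF assms(3)] by blast
  have hb: "h <# proj b = proj (h \<otimes> b)" using Y(2) h B_carrier by (simp add: proj_mult subsetD)
  have "conn U (proj (h \<otimes> b))"
    using conn_edge[OF assms(4)[OF Y(1)] assms(2) far_W[OF assms(1) Y(2)]]
      E_translate[OF Y(3) h] hb
    by simp
  then show ?thesis using far_conn[OF assms(1) Y(2)] conn_sym conn_trans by blast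
qed

lemma component_translate:
  assumes "far h" and "U \<in> W" and "\<not> conn (proj h) U"
  shows "{Z. conn U Z} \<subseteq> (\<lambda>Y. h <# Y) ` {Y. conn (proj (inv h)) Y}"
proof -
  have h: "h \<in> carrier G" using assms(1) by (simp add: far_def)
  define U' where "U' = inv h <# U"
  have U': "U' \<in> W" unfolding U'_def using translate_outside[OF assms] .
  have cancel: "h <# U' = U" using translate_cancel[OF h] assms(2) by (simp add: U'_def W_def)
  have key: "conn (proj (inv h)) U'"
  proof (rule ccontr)
    assume not_conn: "\<not> conn (proj (inv h)) U'"
    have "conn U (h <# Y)" if "conn U' Y" for Y
      using translate_component[OF far_inv[OF assms(1)] U' not_conn that] cancel h by simp
    then have "conn (proj h) U" using absorb[OF assms(1,2) U'] by blast
    then show False using assms(3) by simp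
  qed
  show ?thesis
  proof
    fix Z assume "Z \<in> {Z. conn U Z}"
    then have Z: "conn U Z" by simp
    have "conn (proj (inv h)) (inv h <# Z)"
      using conn_trans[OF key[unfolded U'_def] translate_component[OF assms Z]] .
    moreover have "Z = h <# (inv h <# Z)"
      using translate_cancel[OF h] conn_W[OF Z assms(2)] by (simp add: W_def)
    ultimately show "Z \<in> (\<lambda>Y. h <# Y) ` {Y. conn (proj (inv h)) Y}" by blast
  qed
qed

text \<open>proj h and proj h^-1 are connected in W: otherwise the component of proj h^-1 would be
  invariant under translation by h, by a counting argument.\<close>

lemma far_conn_inv:
  assumes "far h"
  shows "conn (proj h) (proj (inv h))"
proof (rule ccontr)
  assume not_conn: "\<not> conn (proj h) (proj (inv h))"
  define K where "K = {Z. conn (proj (inv h)) Z}"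
  have U: "proj (inv h) \<in> W" using far_W_one[OF far_inv[OF assms]] .
  have "K \<subseteq> (\<lambda>Y. h <# Y) ` K"
    using component_translate[OF assms U not_conn] by (simp add: K_def)
  then have "K = (\<lambda>Y. h <# Y) ` K"
    using image_squeeze component_finite[OF U] by (metis K_def)
  then have "conn (proj (inv h)) (h <# Y)" if "conn (proj (inv h)) Y" for Y
    using that by (auto simp: K_def)
  then show False using absorb[OF assms U U] not_conn by blast
qed

lemma far_far:
  assumes "far h1" and "far h2"
  shows "conn (proj h1) (proj h2)"
proof (rule ccontr)
  assume n12: "\<not> conn (proj h1) (proj h2)"
  then have n21: "\<not> conn (proj h2) (proj h1)" using conn_sym by blast
  define K1 where "K1 = {Y. conn (proj h1) Y}"
  define K2 where "K2 = {Y. conn (proj h2) Y}"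
  have W1: "proj h1 \<in> W" and W2: "proj h2 \<in> W" using far_W_one assms by auto
  have inv_comp: "{Y. conn (proj (inv h)) Y} \<subseteq> {Y. conn (proj h) Y}" if "far h" for h
    using far_conn_inv[OF that] conn_trans by blast
  have "K2 \<subseteq> (\<lambda>Y. h1 <# Y) ` K1"
    using component_translate[OF assms(1) W2 n12] image_mono[OF inv_comp[OF assms(1)]]
    unfolding K1_def K2_def by (rule subset_trans)
  moreover have "K1 \<subseteq> (\<lambda>Y. h2 <# Y) ` K2"
    using component_translate[OF assms(2) W1 n21] image_mono[OF inv_comp[OF assms(2)]]
    unfolding K1_def K2_def by (rule subset_trans)
  ultimately have "K2 = (\<lambda>Y. h1 <# Y) ` K1"
    using image_squeeze component_finite[OF W1] component_finite[OF W2] by (metis K1_def K2_def)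
  then have "conn (proj h2) (h1 <# Y)" if "conn (proj h1) Y" for Y
    using that by (auto simp: K1_def K2_def)
  then show False using absorb[OF assms(1) W2 W1] n12 by blast
qed

lemma not_far_repr:
  assumes "g \<in> carrier G" and "\<not> far g"
  shows "\<exists>d\<in>diffs B. proj g = proj d"
proof -
  obtain b b' where b: "b \<in> B" "b' \<in> B" "proj (g \<otimes> b) = proj b'"
    using assms by (auto simp: far_def)
  have bc: "b \<in> carrier G" "b' \<in> carrier G" using b(1,2) B_carrier by auto
  have sub: "subgroup H G" using normal_H normal_imp_subgroup by blast
  have "inv (g \<otimes> b) \<otimes> b' \<in> H"
    using b(3) l_coset_eq_iff[OF sub] assms(1) bc by (simp add: proj_def)
  then have "b \<otimes> (inv (g \<otimes> b) \<otimes> b') \<otimes> inv b \<in> H"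
    using normal.inv_op_closed2[OF normal_H bc(1)] by blast
  moreover have "b \<otimes> (inv (g \<otimes> b) \<otimes> b') \<otimes> inv b = inv g \<otimes> (b' \<otimes> inv b)"
    using assms(1) bc by (simp add: inv_mult_group m_assoc[symmetric])
  ultimately have "proj g = proj (b' \<otimes> inv b)"
    using l_coset_eq_iff[OF sub] assms(1) bc by (simp add: proj_def)
  moreover have "b' \<otimes> inv b \<in> diffs B" using b(1,2) by (force simp: diffs_def)
  ultimately show ?thesis by blast
qed

lemma proj_inj: "x \<in> spread B \<Longrightarrow> y \<in> spread B \<Longrightarrow> proj x = proj y \<Longrightarrow> x = y"
  using spread_inj by (auto simp: proj_def dest: inj_onD)

text \<open>A component of W without far vertices lifts, by injectivity on spread B, to a trap of B
  in G.\<close>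

lemma farless_component_trap:
  assumes U: "U \<in> W" and repr: "\<And>Z. conn U Z \<Longrightarrow> \<exists>d\<in>diffs B. Z = proj d"
  shows "trap edge B {d \<in> diffs B. conn U (proj d)}" (is "trap edge B ?K")
  unfolding trap_def
proof (intro conjI ballI allI impI)
  show "finite ?K" using B_finite by (simp add: diffs_def)
  show "?K \<inter> B = {}" using conn_W[OF _ U] by (auto simp: W_def)
  fix d y assume d: "d \<in> ?K" and "edge d y"
  then obtain s where s: "s \<in> S" "y = d \<otimes> s" by (auto simp: edge_def)
  have y_spread: "y \<in> spread B" using diffs_times_gen_spread d s by simp
  have E: "E (proj d) (proj y)" using E_proj[OF \<open>edge d y\<close>] .
  show "y \<in> ?K \<union> B"
  proof (cases "proj y \<in> W")
    case True
    then have conn_y: "conn U (proj y)" using conn_edge[of U "proj d"] d U E by simp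
    then obtain d' where d': "d' \<in> diffs B" "proj y = proj d'" using repr by blast
    then have "y = d'" using proj_inj[OF y_spread diffs_spread[OF B_carrier d'(1)]] by simp
    then show ?thesis using d' conn_y by simp
  next
    case False
    then obtain b where b: "b \<in> B" "proj y = proj b" using E_in_V[OF E] by (auto simp: W_def)
    have "b \<in> spread B"
      using diffs_spread[OF B_carrier] subset_diffs[OF one_in_B B_carrier] b(1) by blast
    then have "y = b" using proj_inj[OF y_spread] b(2) by simp
    then show ?thesis using b(1) by simp
  qed
qed

lemma reach_far:
  assumes "U \<in> W"
  shows "\<exists>h. far h \<and> conn U (proj h)"
proof (rule ccontr)
  assume no_far: "\<not> (\<exists>h. far h \<and> conn U (proj h))"
  have repr: "\<exists>d\<in>diffs B. Z = proj d" if Z: "conn U Z" for Z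
  proof -
    obtain g where g: "g \<in> carrier G" "Z = proj g"
      using conn_W[OF Z assms] by (auto simp: W_def V_eq)
    have "\<not> far g" using no_far Z g(2) by blast
    then show ?thesis using not_far_repr[OF g(1)] g(2) by simp
  qed
  have "conn U U" by (simp add: conn_def)
  then obtain d where d: "d \<in> diffs B" "U = proj d" using repr by blast
  have "{d \<in> diffs B. conn U (proj d)} \<subseteq> carrier G" using diffs_carrier[OF B_carrier] by blast
  then have "{d \<in> diffs B. conn U (proj d)} = {}"
    using B_no_trap farless_component_trap[OF assms repr] by blast
  then show False using d \<open>conn U U\<close> by blast
qed

theorem complement_connected:
  "cayley_connected G H S (quot_vertices G H - (\<lambda>g. g <# H) ` B)"
proof -
  have "conn U Z" if U: "U \<in> W" and Z: "Z \<in> W" for U Z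
  proof -
    obtain h1 where h1: "far h1" "conn U (proj h1)" using reach_far[OF U] by blast
    obtain h2 where h2: "far h2" "conn Z (proj h2)" using reach_far[OF Z] by blast
    show ?thesis
      using conn_trans[OF conn_trans[OF h1(2) far_far[OF h1(1) h2(1)]] conn_sym[OF h2(2)]] .
  qed
  moreover have "induced W E = (\<lambda>A C. A \<in> W \<and> C \<in> W \<and> cayley_edge G H S A C)"
    by (simp add: fun_eq_iff induced_def E_def)
  ultimately have "cayley_connected G H S W"
    unfolding cayley_connected_def conn_def by simp
  moreover have "W = quot_vertices G H - (\<lambda>g. g <# H) ` B" by (simp add: W_def V_def proj_def)
  ultimately show ?thesis by (simp only:)
qed

end

section \<open>Passing to the sequence of quotients\<close>

lemma eventually_avoids:
  fixes Gam :: "nat \<Rightarrow> 'a set"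
  assumes "finite F" and "(\<Inter>n. \<Union>i\<in>{n..}. Gam i) = {e}" and "e \<notin> F"
  shows "\<exists>N. \<forall>n\<ge>N. F \<inter> Gam n = {}"
proof -
  have "\<forall>g\<in>F. \<exists>k. \<forall>i\<ge>k. g \<notin> Gam i"
  proof
    fix g assume "g \<in> F"
    then have "g \<notin> (\<Inter>n. \<Union>i\<in>{n..}. Gam i)" using assms(2,3) by auto
    then show "\<exists>k. \<forall>i\<ge>k. g \<notin> Gam i" by auto
  qed
  then obtain N where "\<forall>g\<in>F. \<exists>k\<le>N. \<forall>i\<ge>k. g \<notin> Gam i"
    using finite_bound[OF assms(1), of "\<lambda>g k. \<forall>i\<ge>k. g \<notin> Gam i"] by blast
  then have "\<forall>n\<ge>N. F \<inter> Gam n = {}" by fastforce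
  then show ?thesis by blast
qed

lemma (in group) eventually_inj_on_cosets:
  fixes Gam :: "nat \<Rightarrow> 'a set"
  assumes sub: "\<And>n. subgroup (Gam n) G" and residual: "(\<Inter>n. \<Union>i\<in>{n..}. Gam i) = {\<one>}"
    and C: "finite C" "C \<subseteq> carrier G"
  shows "\<exists>N. \<forall>n\<ge>N. inj_on (\<lambda>g. g <# Gam n) C"
proof -
  define F where "F = (\<lambda>(x, y). inv x \<otimes> y) ` {(x, y) \<in> C \<times> C. x \<noteq> y}"
  have "finite F" unfolding F_def
    by (rule finite_imageI, rule finite_subset[of _ "C \<times> C"]) (use C(1) in auto)
  moreover have "\<one> \<notin> F"
  proof
    assume "\<one> \<in> F"
    then obtain x y where "x \<in> C" "y \<in> C" "x \<noteq> y" "inv x \<otimes> y = \<one>"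
      unfolding F_def by auto
    then show False using inv_mult_eq_one_iff C(2) by auto
  qed
  ultimately obtain N where N: "\<forall>n\<ge>N. F \<inter> Gam n = {}"
    using eventually_avoids[OF _ residual] by blast
  have "inj_on (\<lambda>g. g <# Gam n) C" if "n \<ge> N" for n
  proof (rule l_coset_inj_on[OF sub C(2)])
    fix x y assume "x \<in> C" "y \<in> C" "x \<noteq> y"
    then have "inv x \<otimes> y \<in> F" unfolding F_def by (intro rev_image_eqI[of "(x, y)"]) auto
    then show "inv x \<otimes> y \<notin> Gam n" using N that by blast
  qed
  then show ?thesis by blast
qed

lemma (in cayley_graph) eventually_connected_complement:
  fixes Gam :: "nat \<Rightarrow> 'a set"
  assumes normal: "\<And>n. Gam n \<lhd> G" and finite_index: "\<And>n. finite (rcosets (Gam n))"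
    and residual: "(\<Inter>n. \<Union>i\<in>{n..}. Gam i) = {\<one>}"
    and A: "finite A" "A \<subseteq> carrier G"
  shows "\<exists>B. finite B \<and> A \<subseteq> B \<and> B \<subseteq> carrier G \<and>
           (\<exists>N. \<forall>n\<ge>N. cayley_connected G (Gam n) S
                          (quot_vertices G (Gam n) - (\<lambda>g. g <# Gam n) ` B))"
proof -
  obtain B where B: "finite B" "A \<subseteq> B" "B \<subseteq> carrier G" "\<one> \<in> B"
    "\<And>b. b \<in> B \<Longrightarrow> (induced B edge)\<^sup>*\<^sup>* \<one> b"
    "\<And>K. K \<subseteq> carrier G \<Longrightarrow> trap edge B K \<Longrightarrow> K = {}"
    using filled_set_exists[OF A] by blast
  obtain N where N: "\<forall>n\<ge>N. inj_on (\<lambda>g. g <# Gam n) (spread B)"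
    using eventually_inj_on_cosets[OF normal_imp_subgroup[OF normal] residual
        spread_finite[OF B(1)] spread_carrier[OF B(3)]] by blast
  have "cayley_connected G (Gam n) S (quot_vertices G (Gam n) - (\<lambda>g. g <# Gam n) ` B)"
    if "n \<ge> N" for n
  proof -
    have inj: "inj_on (\<lambda>g. g <# Gam n) (spread B)" using N that by blast
    interpret cayley_quotient G S "Gam n" B
      by (rule cayley_quotient.intro[OF cayley_graph_axioms cayley_quotient_axioms.intro,
            OF normal finite_index B(1,3-6) inj])
    show ?thesis by (rule complement_connected)
  qed
  then show ?thesis using B(1-3) by (intro exI[of _ B] conjI exI[of _ N] allI impI) auto
qed

theorem lemma5p3:
  fixes G :: "('a, 'b) monoid_scheme" and Gam :: "nat \<Rightarrow> 'a set" and S :: "'a set"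
  assumes "group G"
    and "infinite (carrier G)"
    and "\<And>n. Gam n \<lhd> G"
    and "\<And>n. finite (rcosets\<^bsub>G\<^esub> (Gam n))"
    and "(\<Inter>n. \<Union>i\<in>{n..}. Gam i) = {\<one>\<^bsub>G\<^esub>}"
    and "finite S"
    and "S \<subseteq> carrier G - {\<one>\<^bsub>G\<^esub>}"
    and "\<And>s. s \<in> S \<Longrightarrow> inv\<^bsub>G\<^esub> s \<in> S"
    and "generate G S = carrier G"
  shows "\<forall>A. finite A \<and> A \<subseteq> carrier G \<longrightarrow>
           (\<exists>B. finite B \<and> A \<subseteq> B \<and> B \<subseteq> carrier G \<and>
              (\<exists>N. \<forall>n\<ge>N. cayley_connected G (Gam n) S
                   (quot_vertices G (Gam n) - (\<lambda>g. l_coset G g (Gam n)) ` B)))"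
proof -
  interpret cayley_graph G S
    by (rule cayley_graph.intro[OF assms(1) cayley_graph_axioms.intro]) (use assms(6-9) in auto)
  show ?thesis using eventually_connected_complement[OF assms(3-5)] by simp
qed

end
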